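(* Let $f:\mathbb{F}_2^{\,n}\to\mathbb{R}$, $s\ge1$, $0<\epsilon\le 1/2$, and let $d$ satisfy $2^d=\frac{2s}{\epsilon^4}$. Let $H\le\mathbb{F}_2^{\,n}$ be a uniformly random subspace of codimension $d$. Let $\mathcal E_1\ge\mathcal E_2\ge\dots\ge\mathcal E_{2^n}$ be the energies $\hat f(\alpha)^2$ of the $2^n$ Fourier coefficients of $f$ in non-increasing order, and let $y_1\ge y_2\ge\dots\ge y_{2^d}$ be the energies of the $2^d$ cosets of $H$ in non-increasing order. Then $$\Pr_H\left[\sum_{i=1}^s (y_i-\mathcal E_i)\le 5\epsilon^2\|f\|_2^2\right]\ge\frac{15}{16}.$$
   Context: $\hat f(\alpha)=\frac{1}{2^n}\sum_x f(x)(-1)^{\alpha\cdot x}$, $\|f\|_2^2=\frac{1}{2^n}\sum_xf(x)^2$. The energy of a coset $a+H$ is $\sum_{\beta\in a+H}\hat f(\beta)^2$. *)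

theory Defs
  imports "HOL-Library.Multiset" "HOL-Probability.Probability_Mass_Function"
begin

text \<open>We model F_2^n, for n = CARD('n), as the type of subsets of a finite
  index type 'n (a vector is identified with its support). Addition in F_2^n
  is symmetric difference, the zero vector is the empty set, and the inner
  product alpha . x is the parity of card (alpha \<inter> x).\<close>

definition vadd :: "'n set \<Rightarrow> 'n set \<Rightarrow> 'n set" where
  "vadd a b = (a - b) \<union> (b - a)"

definition chr :: "'n::finite set \<Rightarrow> 'n set \<Rightarrow> real" where
  "chr \<alpha> x = (-1) ^ card (\<alpha> \<inter> x)"

definition fourier :: "('n::finite set \<Rightarrow> real) \<Rightarrow> 'n set \<Rightarrow> real" where
  "fourier f \<alpha> = (1 / 2 ^ CARD('n)) * (\<Sum>x\<in>UNIV. f x * chr \<alpha> x)"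

definition norm2sq :: "('n::finite set \<Rightarrow> real) \<Rightarrow> real" where
  "norm2sq f = (1 / 2 ^ CARD('n)) * (\<Sum>x\<in>UNIV. (f x)^2)"

text \<open>Linear subspaces of F_2^n (over F_2, closure under addition and
  containing 0 is exactly being a subspace) of codimension d.\<close>
definition is_subspace :: "'n set set \<Rightarrow> bool" where
  "is_subspace H \<longleftrightarrow> {} \<in> H \<and> (\<forall>a\<in>H. \<forall>b\<in>H. vadd a b \<in> H)"

definition subspaces_codim :: "nat \<Rightarrow> 'n::finite set set set" where
  "subspaces_codim d = {H. is_subspace H \<and> card H = 2 ^ (CARD('n) - d) \<and> d \<le> CARD('n)}"

definition cosets :: "'n set set \<Rightarrow> 'n set set set" where
  "cosets H = (\<lambda>a. (\<lambda>h. vadd a h) ` H) ` UNIV"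

definition coset_energy :: "('n::finite set \<Rightarrow> real) \<Rightarrow> 'n set set \<Rightarrow> real" where
  "coset_energy f C = (\<Sum>\<beta>\<in>C. (fourier f \<beta>)^2)"

definition desc :: "real multiset \<Rightarrow> real list" where
  "desc M = rev (sorted_list_of_multiset M)"

text \<open>E i (1-based): i-th largest Fourier energy; y H i: i-th largest coset energy.\<close>
definition fourier_energy_sorted :: "('n::finite set \<Rightarrow> real) \<Rightarrow> nat \<Rightarrow> real" where
  "fourier_energy_sorted f i =
     desc (image_mset (\<lambda>\<alpha>. (fourier f \<alpha>)^2) (mset_set UNIV)) ! (i - 1)"

definition coset_energy_sorted :: "('n::finite set \<Rightarrow> real) \<Rightarrow> 'n set set \<Rightarrow> nat \<Rightarrow> real" where
  "coset_energy_sorted f H i =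
     desc (image_mset (coset_energy f) (mset_set (cosets H))) ! (i - 1)"

end

theory Submission
  imports Defs "HOL-Analysis.Convex"
begin

text \<open>
  Write a = fhat^2. Fix H and let C_1, ..., C_s be the s cosets of largest energy. Split the
  energy of C_j into its largest term a(m_j) and the remainder r_j. The m_j lie in distinct
  cosets, so the a(m_j) sum to at most E_1 + ... + E_s. Because a(m_j) dominates every term of
  C_j, r_j^2 is at most the sum of a(alpha) a(beta) over ordered pairs of distinct alpha, beta in
  C_j; by Cauchy-Schwarz the r_j therefore sum to at most sqrt(s Q(H)), where Q(H) is the sum of
  a(alpha) a(beta) over all alpha /= beta with alpha + beta in H.

  Linear involutions act transitively on nonzero vectors, so double counting shows that a fixed
  nonzero vector lies in a random subspace of codimension d with probability at most 2^-d.
  Hence E Q(H) <= ||f||^4 / 2^d by Parseval, and by Markov Q(H) <= 16 ||f||^4 / 2^d with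
  probability at least 15/16. For such H, sqrt(s Q(H)) <= sqrt 8 eps^2 ||f||^2 < 5 eps^2 ||f||^2.
\<close>

section \<open>Sums of the largest values\<close>

definition top_sum :: "('a \<Rightarrow> real) \<Rightarrow> 'a set \<Rightarrow> nat \<Rightarrow> real" where
  "top_sum g A s = (\<Sum>i=1..s. desc (image_mset g (mset_set A)) ! (i - 1))"

lemma sum_nth_le_sum_prefix:
  fixes ys :: "real list"
  assumes sorted: "sorted_wrt (\<ge>) ys" and I: "I \<subseteq> {..<length ys}" and card_I: "card I = s"
  shows "(\<Sum>i\<in>I. ys ! i) \<le> (\<Sum>i<s. ys ! i)"
proof (cases "s = 0")
  case True
  then show ?thesis using card_I I by (simp add: finite_subset)
next
  case False
  have fin: "finite I" using I finite_subset by blast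
  have s_le: "s \<le> length ys" using card_mono[OF _ I] card_I by simp
  define v where "v = ys ! (s - 1)"
  have anti: "ys ! j \<le> ys ! i" if "i \<le> j" "j < length ys" for i j
    using sorted that by (cases "i = j") (auto simp: sorted_wrt_iff_nth_less)
  have "card (I - {..<s}) = card ({..<s} - I)"
    using card_Int_Diff[OF fin, of "{..<s}"] card_Int_Diff[of "{..<s}" I] card_I
    by (simp add: Int_commute)
  then have "(\<Sum>i\<in>I - {..<s}. ys ! i) \<le> (\<Sum>i\<in>{..<s} - I. ys ! i)"
  proof -
    have "(\<Sum>i\<in>I - {..<s}. ys ! i) \<le> (\<Sum>i\<in>I - {..<s}. v)"
      unfolding v_def using I False by (intro sum_mono anti) auto
    also have "\<dots> = (\<Sum>i\<in>{..<s} - I. v)"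
      using \<open>card (I - {..<s}) = card ({..<s} - I)\<close> by simp
    also have "\<dots> \<le> (\<Sum>i\<in>{..<s} - I. ys ! i)"
      unfolding v_def using s_le False by (intro sum_mono anti) auto
    finally show ?thesis .
  qed
  moreover have "(\<Sum>i\<in>I. ys ! i) = (\<Sum>i\<in>I \<inter> {..<s}. ys ! i) + (\<Sum>i\<in>I - {..<s}. ys ! i)"
    using fin by (rule sum.Int_Diff)
  moreover have "(\<Sum>i<s. ys ! i) = (\<Sum>i\<in>{..<s} \<inter> I. ys ! i) + (\<Sum>i\<in>{..<s} - I. ys ! i)"
    by (rule sum.Int_Diff) simp
  ultimately show ?thesis by (simp add: Int_commute)
qed

lemma sorted_desc: "sorted_wrt (\<ge>) (desc M)"
  using sorted_sorted_list_of_multiset[of M] by (simp add: desc_def sorted_wrt_rev)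

lemma desc_image_mset_mset_set:
  fixes g :: "'a \<Rightarrow> real"
  assumes "finite A"
  obtains zs where "distinct zs" "set zs = A" "desc (image_mset g (mset_set A)) = map g zs"
proof -
  obtain xs where xs: "distinct xs" "set xs = A"
    using finite_distinct_list[OF assms] by blast
  have "mset_set A = mset xs" using mset_set_set[OF xs(1)] xs(2) by simp
  moreover have "sort (map g xs) = map g (sort_key g xs)"
    by (rule properties_for_sort) simp_all
  ultimately have "desc (image_mset g (mset_set A)) = map g (rev (sort_key g xs))"
    unfolding desc_def by (simp add: rev_map flip: mset_map)
  then show thesis using xs by (intro that[of "rev (sort_key g xs)"]) auto
qed

lemma top_sum_eq_sum_subset:
  fixes g :: "'a \<Rightarrow> real"
  assumes "finite A" and "s \<le> card A"
  obtains B where "B \<subseteq> A" "card B = s" "top_sum g A s = sum g B"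
proof -
  obtain zs where zs: "distinct zs" "set zs = A" "desc (image_mset g (mset_set A)) = map g zs"
    using desc_image_mset_mset_set[OF assms(1)] by blast
  have len: "length zs = card A" using zs distinct_card by metis
  have inj: "inj_on ((!) zs) {..<s}"
    using zs(1) len assms(2) by (auto simp: inj_on_def nth_eq_iff_index_eq)
  have "top_sum g A s = (\<Sum>i<s. g (zs ! i))"
    unfolding top_sum_def zs(3) using len assms(2)
    by (simp add: sum.atLeast1_atMost_eq)
  also have "\<dots> = sum g ((!) zs ` {..<s})" by (simp add: sum.reindex[OF inj])
  finally show thesis
    using zs(2) len assms(2) card_image[OF inj] by (intro that) auto
qed

lemma sum_le_top_sum:
  fixes g :: "'a \<Rightarrow> real"
  assumes "finite A" and "B \<subseteq> A" and "card B = s"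
  shows "sum g B \<le> top_sum g A s"
proof -
  obtain zs where zs: "distinct zs" "set zs = A" "desc (image_mset g (mset_set A)) = map g zs"
    using desc_image_mset_mset_set[OF assms(1)] by blast
  have len: "length zs = card A" using zs distinct_card by metis
  define I where "I = {i. i < length zs \<and> zs ! i \<in> B}"
  have inj: "inj_on ((!) zs) I"
    using zs(1) by (auto simp: I_def inj_on_def nth_eq_iff_index_eq)
  have B_eq: "B = (!) zs ` I"
    using assms(2) zs(2) by (fastforce simp: I_def in_set_conv_nth)
  have "sum g B = (\<Sum>i\<in>I. g (zs ! i))"
    unfolding B_eq sum.reindex[OF inj] by simp
  also have "\<dots> = (\<Sum>i\<in>I. map g zs ! i)"
    by (rule sum.cong) (simp_all add: I_def)
  also have "\<dots> \<le> (\<Sum>i<s. map g zs ! i)"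
  proof (rule sum_nth_le_sum_prefix)
    show "sorted_wrt (\<ge>) (map g zs)"
      using sorted_desc[of "image_mset g (mset_set A)"] zs(3) by simp
    show "I \<subseteq> {..<length (map g zs)}" by (auto simp: I_def)
    show "card I = s" using card_image[OF inj] B_eq assms(3) by simp
  qed
  also have "\<dots> = top_sum g A s"
    unfolding top_sum_def zs(3) by (simp add: sum.atLeast1_atMost_eq)
  finally show ?thesis .
qed

section \<open>Fourier analysis on F_2^n\<close>

lemma vadd_assoc: "vadd (vadd a b) c = vadd a (vadd b c)"
  by (auto simp: vadd_def)

lemma vadd_self [simp]: "vadd a a = {}"
  by (auto simp: vadd_def)

lemma vadd_empty [simp]: "vadd a {} = a"
  by (auto simp: vadd_def)

lemma vadd_cancel [simp]: "vadd a (vadd a b) = b"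
  by (auto simp: vadd_def)

lemma vadd_eq_empty_iff: "vadd a b = {} \<longleftrightarrow> a = b"
  by (auto simp: vadd_def)

lemma bij_vadd: "bij (vadd a)"
  by (rule involuntory_imp_bij) simp

lemma card_Int_vadd:
  fixes A x y :: "'n::finite set"
  shows "card (A \<inter> x) + card (A \<inter> y) = card (A \<inter> vadd x y) + 2 * card (A \<inter> x \<inter> y)"
proof -
  have "card (A \<inter> x) = card (A \<inter> x - y) + card (A \<inter> x \<inter> y)"
    using card_Int_Diff[of "A \<inter> x" y] by (simp add: Int_assoc)
  moreover have "card (A \<inter> y) = card (A \<inter> y - x) + card (A \<inter> x \<inter> y)"
    using card_Int_Diff[of "A \<inter> y" x] by (simp add: Int_ac)
  moreover have "card (A \<inter> vadd x y) = card (A \<inter> x - y) + card (A \<inter> y - x)"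
  proof -
    have "A \<inter> vadd x y = (A \<inter> x - y) \<union> (A \<inter> y - x)"
      by (auto simp: vadd_def)
    then show ?thesis by (simp add: card_Un_disjoint disjoint_iff)
  qed
  ultimately show ?thesis by simp
qed

lemma odd_card_Int_vadd:
  fixes A x y :: "'n::finite set"
  shows "odd (card (A \<inter> vadd x y)) \<longleftrightarrow> odd (card (A \<inter> x)) \<noteq> odd (card (A \<inter> y))"
  using card_Int_vadd[of A x y] by presburger

lemma chr_commute: "chr \<alpha> x = chr x \<alpha>"
  by (simp add: chr_def Int_commute)

lemma chr_vadd: "chr \<alpha> (vadd x y) = chr \<alpha> x * chr \<alpha> y"
proof -
  have "chr \<alpha> x * chr \<alpha> y = (-1) ^ (card (\<alpha> \<inter> vadd x y) + 2 * card (\<alpha> \<inter> x \<inter> y))"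
    by (simp add: chr_def power_add flip: card_Int_vadd)
  then show ?thesis by (simp add: chr_def power_add power_mult)
qed

lemma sum_chr: "(\<Sum>\<alpha>\<in>UNIV. chr \<alpha> (z::'n::finite set)) = (if z = {} then 2 ^ CARD('n) else 0)"
proof (cases "z = {}")
  case True
  then show ?thesis by (simp add: chr_def card_UNIV_set)
next
  case False
  then obtain i where "i \<in> z" by blast
  then have negate: "chr (vadd {i} \<alpha>) z = - chr \<alpha> z" for \<alpha>
    by (simp add: chr_commute[of _ z] chr_vadd) (simp add: chr_def Int_insert_right)
  have "(\<Sum>\<alpha>\<in>UNIV. chr \<alpha> z) = (\<Sum>\<alpha>\<in>UNIV. chr (vadd {i} \<alpha>) z)"
    using sum.reindex_bij_betw[OF bij_vadd, of "\<lambda>\<alpha>. chr \<alpha> z"] by simp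
  then show ?thesis using False by (simp add: negate sum_negf)
qed

lemma parseval: "(\<Sum>\<alpha>\<in>UNIV. (fourier f \<alpha>)^2) = norm2sq (f :: 'n::finite set \<Rightarrow> real)"
proof -
  define N :: real where "N = 2 ^ CARD('n)"
  have "(\<Sum>\<alpha>\<in>UNIV. (\<Sum>x\<in>UNIV. f x * chr \<alpha> x)^2)
      = (\<Sum>\<alpha>\<in>UNIV. \<Sum>x\<in>UNIV. \<Sum>y\<in>UNIV. f x * f y * chr \<alpha> (vadd x y))"
    by (simp add: power2_eq_square sum_product chr_vadd mult_ac)
  also have "\<dots> = (\<Sum>x\<in>UNIV. \<Sum>y\<in>UNIV. f x * f y * (\<Sum>\<alpha>\<in>UNIV. chr \<alpha> (vadd x y)))"
    by (subst sum.swap, subst sum.swap) (simp add: sum_distrib_left)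
  also have "\<dots> = (\<Sum>x\<in>UNIV. \<Sum>y\<in>UNIV. if y = x then N * (f x)^2 else 0)"
    by (intro sum.cong refl) (auto simp: sum_chr vadd_eq_empty_iff N_def power2_eq_square)
  also have "\<dots> = N * (\<Sum>x\<in>UNIV. (f x)^2)"
    by (simp add: sum_distrib_left)
  finally have "(\<Sum>\<alpha>\<in>UNIV. (\<Sum>x\<in>UNIV. f x * chr \<alpha> x)^2) = N * (\<Sum>x\<in>UNIV. (f x)^2)" .
  moreover have "(fourier f \<alpha>)^2 = (\<Sum>x\<in>UNIV. f x * chr \<alpha> x)^2 / N^2" for \<alpha>
    by (simp add: fourier_def N_def power_divide)
  ultimately show ?thesis
    by (simp add: norm2sq_def N_def power2_eq_square flip: sum_divide_distrib)
qed

lemma mem_coset_iff: "x \<in> vadd a ` H \<longleftrightarrow> vadd a x \<in> H"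
  by (metis image_iff vadd_cancel)

lemma coset_eq:
  assumes "is_subspace H" and "vadd a x \<in> H"
  shows "vadd a ` H = vadd x ` H"
proof -
  have "vadd x y = vadd (vadd a x) (vadd a y)" "vadd a y = vadd (vadd a x) (vadd x y)" for y
    by (auto simp: vadd_def)
  then have "vadd a y \<in> H \<longleftrightarrow> vadd x y \<in> H" for y
    using assms by (metis is_subspace_def)
  then show ?thesis
    by (simp add: set_eq_iff mem_coset_iff)
qed

lemma self_mem_coset: "is_subspace H \<Longrightarrow> x \<in> vadd x ` H"
  by (simp add: mem_coset_iff is_subspace_def)

lemma coset_of_mem:
  assumes "is_subspace H" and "C \<in> cosets H" and "x \<in> C"
  shows "C = vadd x ` H"
proof -
  obtain a where a: "C = vadd a ` H"
    using assms(2) by (auto simp: cosets_def)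
  with assms(3) have "vadd a x \<in> H"
    by (simp add: mem_coset_iff)
  with a show ?thesis
    using coset_eq[OF assms(1)] by simp
qed

lemma cosets_disjoint:
  assumes "is_subspace H" and "C \<in> cosets H" "C' \<in> cosets H" "C \<noteq> C'"
  shows "C \<inter> C' = {}"
  using assms coset_of_mem by blast

lemma Union_cosets: "is_subspace H \<Longrightarrow> \<Union>(cosets H) = UNIV"
  using self_mem_coset by (fastforce simp: cosets_def)

lemma card_coset: "card (vadd a ` H) = card H"
  by (rule card_image) (metis inj_onI vadd_cancel)

lemma card_mult_card_cosets:
  fixes H :: "'n::finite set set"
  assumes "is_subspace H"
  shows "card H * card (cosets H) = 2 ^ CARD('n)"
proof -
  have "card H * card (cosets H) = card (\<Union>(cosets H))"
    using cosets_disjoint[OF assms] card_coset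
    by (intro card_partition) (auto simp: cosets_def)
  then show ?thesis
    using Union_cosets[OF assms] by (simp add: card_UNIV_set)
qed

lemma card_cosets_subspaces_codim:
  assumes "(H :: 'n::finite set set) \<in> subspaces_codim d"
  shows "card (cosets H) = 2 ^ d"
proof -
  have "is_subspace H" "card H = 2 ^ (CARD('n) - d)" "d \<le> CARD('n)"
    using assms by (auto simp: subspaces_codim_def)
  then have "2 ^ (CARD('n) - d) * card (cosets H) = 2 ^ (CARD('n) - d) * 2 ^ d"
    using card_mult_card_cosets[of H] by (simp flip: power_add)
  then show ?thesis by simp
qed

lemma sum_cosets:
  fixes H :: "'n::finite set set"
  assumes H: "is_subspace H"
  shows "(\<Sum>C\<in>cosets H. \<Sum>\<alpha>\<in>C. G \<alpha> C) = (\<Sum>\<alpha>\<in>UNIV. G \<alpha> (vadd \<alpha> ` H))"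
proof -
  have "(\<Sum>C\<in>cosets H. \<Sum>\<alpha>\<in>C. G \<alpha> C) = (\<Sum>C\<in>cosets H. \<Sum>\<alpha>\<in>C. G \<alpha> (vadd \<alpha> ` H))"
    using coset_of_mem[OF H] by (intro sum.cong refl) simp
  also have "\<dots> = (\<Sum>\<alpha>\<in>\<Union>(cosets H). G \<alpha> (vadd \<alpha> ` H))"
    using cosets_disjoint[OF H]
    by (intro sum.Union_disjoint[unfolded comp_def, symmetric]) (auto simp: cosets_def)
  finally show ?thesis
    using Union_cosets[OF H] by simp
qed

section \<open>Random subspaces of codimension d\<close>

lemma subspaces_codim_nonempty:
  assumes "d \<le> CARD('n::finite)"
  shows "subspaces_codim d \<noteq> ({} :: 'n set set set)"
proof -
  obtain S :: "'n set" where "card S = CARD('n) - d"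
    using obtain_subset_with_card_n[of "CARD('n) - d" "UNIV :: 'n set"] by auto
  moreover have "is_subspace (Pow S)"
    by (auto simp: is_subspace_def vadd_def)
  ultimately have "Pow S \<in> subspaces_codim d"
    using assms by (simp add: subspaces_codim_def card_Pow)
  then show ?thesis by blast
qed

lemma linear_involution_mapping:
  fixes g g' :: "'n::finite set"
  assumes "g \<noteq> {}" and "g' \<noteq> {}"
  obtains T where "\<And>x. T (T x) = x" and "\<And>x y. T (vadd x y) = vadd (T x) (T y)" and "T g = g'"
proof -
  obtain S where S: "odd (card (g \<inter> S))" "odd (card (g' \<inter> S))"
  proof (cases "g \<inter> g' = {}")
    case True
    obtain i j where "i \<in> g" "j \<in> g'" using assms by blast
    with True have "g \<inter> {i, j} = {i}" "g' \<inter> {i, j} = {j}" by auto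
    then show thesis by (intro that[of "{i, j}"]) simp_all
  next
    case False
    then obtain k where "k \<in> g" "k \<in> g'" by blast
    then have "g \<inter> {k} = {k}" "g' \<inter> {k} = {k}" by auto
    then show thesis by (intro that[of "{k}"]) simp_all
  qed
  \<comment> \<open>the transvection \<open>x \<mapsto> x + \<langle>S, x\<rangle> (g + g')\<close>: it maps \<open>g\<close> to \<open>g'\<close> since \<open>\<langle>S, g\<rangle> = 1\<close>,
    and it is an involution since \<open>\<langle>S, g + g'\<rangle> = 0\<close>\<close>
  define v where "v = vadd g g'"
  define T where "T x = (if odd (card (S \<inter> x)) then vadd x v else x)" for x
  have "even (card (S \<inter> v))"
    using odd_card_Int_vadd[of S g g'] S by (simp add: v_def Int_commute)
  then have "odd (card (S \<inter> T x)) \<longleftrightarrow> odd (card (S \<inter> x))" for x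
    using odd_card_Int_vadd[of S x v] by (simp add: T_def)
  then have "T (T x) = x" for x
    by (simp add: T_def vadd_assoc)
  moreover have "T (vadd x y) = vadd (T x) (T y)" for x y
  proof -
    have "vadd (vadd x v) (vadd y v) = vadd x y" "vadd (vadd x v) y = vadd (vadd x y) v"
      "vadd x (vadd y v) = vadd (vadd x y) v"
      by (auto simp: vadd_def)
    then show ?thesis
      using odd_card_Int_vadd[of S x y] by (auto simp: T_def)
  qed
  moreover have "T g = g'"
    using S(1) by (simp add: T_def v_def Int_commute)
  ultimately show thesis by (rule that)
qed

lemma card_subspaces_codim_containing_eq:
  fixes g g' :: "'n::finite set"
  assumes "g \<noteq> {}" and "g' \<noteq> {}"
  shows "card {H \<in> subspaces_codim d. g \<in> H} = card {H \<in> subspaces_codim d. g' \<in> H}"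
proof -
  obtain T where T_T: "\<And>x. T (T x) = x" and T_vadd: "\<And>x y. T (vadd x y) = vadd (T x) (T y)"
    and "T g = g'"
    using linear_involution_mapping[OF assms] by blast
  have "T {} = {}"
    using T_vadd[of "{}" "{}"] by simp
  have image_mem: "T ` H \<in> subspaces_codim d" if "H \<in> subspaces_codim d" for H :: "'n set set"
  proof -
    have "is_subspace (T ` H)"
      using that \<open>T {} = {}\<close> unfolding subspaces_codim_def is_subspace_def
      by (auto simp flip: T_vadd intro!: image_eqI[of "{}" T])
    moreover have "card (T ` H) = card H"
      using T_T by (metis card_image inj_on_inverseI)
    ultimately show ?thesis
      using that by (simp add: subspaces_codim_def)
  qed
  have "T ` T ` H = H" for H :: "'n set set"
    by (simp add: image_image T_T)
  then have "bij_betw ((`) T) {H \<in> subspaces_codim d. g \<in> H} {H \<in> subspaces_codim d. g' \<in> H}"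
    using image_mem \<open>T g = g'\<close> T_T
    by (intro bij_betw_byWitness[where f' = "(`) T"]) (auto, metis image_eqI)
  then show ?thesis
    by (rule bij_betw_same_card)
qed

lemma card_subspaces_codim_containing:
  fixes g :: "'n::finite set"
  assumes "g \<noteq> {}"
  shows "card {H \<in> subspaces_codim d. g \<in> H} * (2 ^ CARD('n) - 1)
       = card (subspaces_codim d :: 'n set set set) * (2 ^ (CARD('n) - d) - 1)"
proof -
  let ?X = "subspaces_codim d :: 'n set set set" and ?U = "UNIV - {{}} :: 'n set set"
  have "(\<Sum>\<gamma>\<in>?U. card {H \<in> ?X. \<gamma> \<in> H}) = (\<Sum>H\<in>?X. card {\<gamma> \<in> ?U. \<gamma> \<in> H})"
    using sum.swap_restrict[of ?U ?X "\<lambda>_ _. 1::nat" "\<lambda>\<gamma> H. \<gamma> \<in> H"] by simp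
  moreover have "(\<Sum>\<gamma>\<in>?U. card {H \<in> ?X. \<gamma> \<in> H}) = card {H \<in> ?X. g \<in> H} * (2 ^ CARD('n) - 1)"
    using card_subspaces_codim_containing_eq[OF _ assms]
    by (simp add: card_UNIV_set card_Diff_singleton)
  moreover have "card {\<gamma> \<in> ?U. \<gamma> \<in> H} = 2 ^ (CARD('n) - d) - 1" if "H \<in> ?X" for H
  proof -
    have "{\<gamma> \<in> ?U. \<gamma> \<in> H} = H - {{}}" by blast
    then show ?thesis
      using that by (simp add: subspaces_codim_def is_subspace_def)
  qed
  ultimately show ?thesis by simp
qed

lemma card_subspaces_codim_containing_le:
  fixes g :: "'n::finite set"
  assumes "g \<noteq> {}"
  shows "card {H \<in> subspaces_codim d. g \<in> H} * 2 ^ d \<le> card (subspaces_codim d :: 'n set set set)"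
proof (cases "d \<le> CARD('n)")
  case False
  then show ?thesis by (simp add: subspaces_codim_def)
next
  case True
  let ?N = "card {H \<in> subspaces_codim d. g \<in> H}" and ?X = "card (subspaces_codim d :: 'n set set set)"
  have "?N * 2 ^ d * (2 ^ CARD('n) - 1) = ?X * (2 ^ (CARD('n) - d) - 1) * 2 ^ d"
    using card_subspaces_codim_containing[OF assms] by (simp add: mult_ac)
  also have "\<dots> = ?X * (2 ^ CARD('n) - 2 ^ d)"
    using True by (simp add: diff_mult_distrib flip: power_add)
  also have "\<dots> \<le> ?X * (2 ^ CARD('n) - 1)"
    by (intro mult_le_mono2 diff_le_mono2) simp
  finally have "?N * 2 ^ d * (2 ^ CARD('n) - 1) \<le> ?X * (2 ^ CARD('n) - 1)" .
  moreover have "(1::nat) < 2 ^ CARD('n)"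
    by (rule one_less_power) simp_all
  ultimately show ?thesis
    by simp
qed

section \<open>Collisions inside cosets\<close>

definition offdiag_sum :: "('a \<Rightarrow> real) \<Rightarrow> 'a set \<Rightarrow> real" where
  "offdiag_sum a C = (\<Sum>\<alpha>\<in>C. \<Sum>\<beta>\<in>C - {\<alpha>}. a \<alpha> * a \<beta>)"

definition collision :: "('n::finite set \<Rightarrow> real) \<Rightarrow> 'n set set \<Rightarrow> real" where
  "collision a H = (\<Sum>\<alpha>\<in>UNIV. \<Sum>\<beta>\<in>UNIV. if \<beta> \<noteq> \<alpha> \<and> vadd \<alpha> \<beta> \<in> H then a \<alpha> * a \<beta> else 0)"

lemma sum_offdiag_sum_cosets:
  fixes a :: "'n::finite set \<Rightarrow> real"
  assumes H: "is_subspace H"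
  shows "(\<Sum>C\<in>cosets H. offdiag_sum a C) = collision a H"
proof -
  have "vadd \<alpha> ` H - {\<alpha>} = {\<beta>. \<beta> \<noteq> \<alpha> \<and> vadd \<alpha> \<beta> \<in> H}" for \<alpha>
    by (auto simp: mem_coset_iff)
  then show ?thesis
    unfolding offdiag_sum_def collision_def sum_cosets[OF H]
    by (simp add: sum.inter_filter[symmetric])
qed

lemma sum_collision_subspaces_codim_le:
  fixes a :: "'n::finite set \<Rightarrow> real" and d :: nat
  assumes a: "\<And>\<alpha>. 0 \<le> a \<alpha>"
  defines "X \<equiv> subspaces_codim d :: 'n set set set"
  shows "(\<Sum>H\<in>X. collision a H) \<le> card X / 2 ^ d * (\<Sum>\<alpha>\<in>UNIV. a \<alpha>)^2"
proof -
  define K where "K = card X / 2 ^ d"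
  have pair: "(\<Sum>H\<in>X. if \<beta> \<noteq> \<alpha> \<and> vadd \<alpha> \<beta> \<in> H then a \<alpha> * a \<beta> else 0)
      \<le> K * (a \<alpha> * a \<beta>)" for \<alpha> \<beta>
  proof (cases "\<beta> = \<alpha>")
    case True
    then show ?thesis using a by (simp add: K_def)
  next
    case False
    then have "real (card {H \<in> X. vadd \<alpha> \<beta> \<in> H} * 2 ^ d) \<le> card X"
      using card_subspaces_codim_containing_le[of "vadd \<alpha> \<beta>" d]
      by (simp only: of_nat_le_iff X_def vadd_eq_empty_iff)
    then have "real (card {H \<in> X. vadd \<alpha> \<beta> \<in> H}) \<le> K"
      by (simp add: K_def field_simps)
    moreover have "(\<Sum>H\<in>X. if \<beta> \<noteq> \<alpha> \<and> vadd \<alpha> \<beta> \<in> H then a \<alpha> * a \<beta> else 0)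
        = real (card {H \<in> X. vadd \<alpha> \<beta> \<in> H}) * (a \<alpha> * a \<beta>)"
      using False sum.inter_filter[of X "\<lambda>_. a \<alpha> * a \<beta>" "\<lambda>H. vadd \<alpha> \<beta> \<in> H"] by (simp add: X_def)
    ultimately show ?thesis
      by (metis a mult_nonneg_nonneg mult_right_mono)
  qed
  have "(\<Sum>H\<in>X. collision a H)
      = (\<Sum>\<alpha>\<in>UNIV. \<Sum>\<beta>\<in>UNIV. \<Sum>H\<in>X. if \<beta> \<noteq> \<alpha> \<and> vadd \<alpha> \<beta> \<in> H then a \<alpha> * a \<beta> else 0)"
    unfolding collision_def by (subst sum.swap) (rule sum.cong[OF refl], rule sum.swap)
  also have "\<dots> \<le> (\<Sum>\<alpha>\<in>UNIV. \<Sum>\<beta>\<in>UNIV. K * (a \<alpha> * a \<beta>))"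
    by (intro sum_mono pair)
  also have "\<dots> = K * (\<Sum>\<alpha>\<in>UNIV. a \<alpha>)^2"
    by (simp add: power2_eq_square sum_product sum_distrib_left mult_ac)
  finally show ?thesis
    by (simp only: K_def)
qed

lemma square_sum_remove_max_le_offdiag_sum:
  fixes a :: "'a \<Rightarrow> real"
  assumes C: "finite C" and b: "b \<in> C" and max: "\<And>\<gamma>. \<gamma> \<in> C \<Longrightarrow> a \<gamma> \<le> a b"
    and a: "\<And>x. 0 \<le> a x"
  shows "(\<Sum>\<beta>\<in>C - {b}. a \<beta>)^2 \<le> offdiag_sum a C"
proof -
  define C' where "C' = C - {b}"
  have "finite C'" using C by (simp add: C'_def)
  have "(\<Sum>\<beta>\<in>C'. a \<beta>)^2 = (\<Sum>\<alpha>\<in>C'. a \<alpha> * (a \<alpha> + (\<Sum>\<beta>\<in>C' - {\<alpha>}. a \<beta>)))"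
    by (simp add: power2_eq_square sum_distrib_left sum.remove[OF \<open>finite C'\<close>] mult_ac)
  also have "\<dots> \<le> (\<Sum>\<alpha>\<in>C'. a \<alpha> * (a b + (\<Sum>\<beta>\<in>C' - {\<alpha>}. a \<beta>)))"
    by (intro sum_mono mult_left_mono add_right_mono max a) (auto simp: C'_def)
  also have "\<dots> = (\<Sum>\<alpha>\<in>C'. a \<alpha> * (\<Sum>\<beta>\<in>C - {\<alpha>}. a \<beta>))"
  proof (intro sum.cong refl)
    fix \<alpha> assume "\<alpha> \<in> C'"
    then have "C - {\<alpha>} = insert b (C' - {\<alpha>})" "b \<notin> C' - {\<alpha>}"
      using b by (auto simp: C'_def)
    then show "a \<alpha> * (a b + (\<Sum>\<beta>\<in>C' - {\<alpha>}. a \<beta>)) = a \<alpha> * (\<Sum>\<beta>\<in>C - {\<alpha>}. a \<beta>)"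
      using \<open>finite C'\<close> by simp
  qed
  also have "\<dots> \<le> (\<Sum>\<alpha>\<in>C. a \<alpha> * (\<Sum>\<beta>\<in>C - {\<alpha>}. a \<beta>))"
    using C a by (intro sum_mono2) (auto simp: C'_def intro!: sum_nonneg mult_nonneg_nonneg)
  finally show ?thesis
    by (simp add: offdiag_sum_def C'_def sum_distrib_left)
qed

lemma sum_disjoint_family_le_sum_maxima:
  fixes a :: "'a \<Rightarrow> real" and \<C> :: "'a set set"
  assumes ne: "\<And>C. C \<in> \<C> \<Longrightarrow> finite C \<and> C \<noteq> {}"
    and disj: "\<And>C C'. C \<in> \<C> \<Longrightarrow> C' \<in> \<C> \<Longrightarrow> C \<noteq> C' \<Longrightarrow> C \<inter> C' = {}"
    and a: "\<And>x. 0 \<le> a x"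
  obtains M where "M \<subseteq> \<Union>\<C>" and "card M = card \<C>"
    and "(\<Sum>C\<in>\<C>. sum a C) \<le> sum a M + sqrt (card \<C> * (\<Sum>C\<in>\<C>. offdiag_sum a C))"
proof -
  have "\<exists>b. b \<in> C \<and> (\<forall>\<gamma>\<in>C. a \<gamma> \<le> a b)" if C: "C \<in> \<C>" for C
  proof -
    have "Max (a ` C) \<in> a ` C"
      using ne[OF C] by simp
    then obtain b where "b \<in> C" "a b = Max (a ` C)"
      by (metis imageE)
    then show ?thesis
      using ne[OF C] by auto
  qed
  then obtain m where m: "\<And>C. C \<in> \<C> \<Longrightarrow> m C \<in> C"
    and m_max: "\<And>C \<gamma>. C \<in> \<C> \<Longrightarrow> \<gamma> \<in> C \<Longrightarrow> a \<gamma> \<le> a (m C)"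
    by metis
  define r where "r C = (\<Sum>\<beta>\<in>C - {m C}. a \<beta>)" for C
  have inj: "inj_on m \<C>"
  proof (rule inj_onI)
    fix C C' assume C: "C \<in> \<C>" and C': "C' \<in> \<C>" and "m C = m C'"
    then have "m C \<in> C \<inter> C'"
      using m by (metis IntI)
    then show "C = C'"
      using disj[OF C C'] by blast
  qed
  have "(\<Sum>C\<in>\<C>. sum a C) = (\<Sum>C\<in>\<C>. a (m C) + r C)"
    using ne m by (intro sum.cong refl) (simp add: r_def sum.remove)
  also have "\<dots> = sum a (m ` \<C>) + (\<Sum>C\<in>\<C>. r C)"
    by (simp add: sum.distrib sum.reindex[OF inj])
  finally have split: "(\<Sum>C\<in>\<C>. sum a C) = sum a (m ` \<C>) + (\<Sum>C\<in>\<C>. r C)" .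
  have "(\<Sum>C\<in>\<C>. r C)^2 \<le> (\<Sum>C\<in>\<C>. (r C)^2) * card \<C>"
    by (rule sum_squared_le_sum_of_squares)
  also have "\<dots> \<le> (\<Sum>C\<in>\<C>. offdiag_sum a C) * card \<C>"
    unfolding r_def using ne m m_max a
    by (intro mult_right_mono sum_mono square_sum_remove_max_le_offdiag_sum) auto
  finally have "(\<Sum>C\<in>\<C>. r C) \<le> sqrt (card \<C> * (\<Sum>C\<in>\<C>. offdiag_sum a C))"
    by (intro real_le_rsqrt) (simp add: mult.commute)
  show thesis
  proof (rule that)
    show "m ` \<C> \<subseteq> \<Union>\<C>"
      using m by blast
    show "card (m ` \<C>) = card \<C>"
      by (rule card_image[OF inj])
    show "(\<Sum>C\<in>\<C>. sum a C) \<le> sum a (m ` \<C>) + sqrt (card \<C> * (\<Sum>C\<in>\<C>. offdiag_sum a C))"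
      using split \<open>(\<Sum>C\<in>\<C>. r C) \<le> _\<close> by linarith
  qed
qed

lemma top_sum_coset_energy_excess_le:
  fixes f :: "'n::finite set \<Rightarrow> real"
  assumes H: "is_subspace H" and s: "s \<le> card (cosets H)"
  shows "(\<Sum>i=1..s. coset_energy_sorted f H i - fourier_energy_sorted f i)
       \<le> sqrt (s * collision (\<lambda>\<alpha>. (fourier f \<alpha>)^2) H)"
proof -
  define a where "a \<alpha> = (fourier f \<alpha>)^2" for \<alpha>
  have a_nonneg: "0 \<le> a \<alpha>" for \<alpha>
    by (simp add: a_def)
  obtain \<C> where \<C>: "\<C> \<subseteq> cosets H" "card \<C> = s"
    and top_cosets: "top_sum (coset_energy f) (cosets H) s = sum (coset_energy f) \<C>"
    using top_sum_eq_sum_subset[OF finite s] by blast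
  have "finite C \<and> C \<noteq> {}" if "C \<in> \<C>" for C
    using that \<C>(1) self_mem_coset[OF H] by (auto simp: cosets_def)
  moreover have "C \<inter> C' = {}" if "C \<in> \<C>" "C' \<in> \<C>" "C \<noteq> C'" for C C'
    using that \<C>(1) cosets_disjoint[OF H] by blast
  ultimately obtain M where "card M = s"
    and M: "(\<Sum>C\<in>\<C>. sum a C) \<le> sum a M + sqrt (s * (\<Sum>C\<in>\<C>. offdiag_sum a C))"
    using sum_disjoint_family_le_sum_maxima[of \<C> a, OF _ _ a_nonneg] \<C>(2) by metis
  have "sum a M \<le> top_sum a UNIV s"
    using \<open>card M = s\<close> by (intro sum_le_top_sum) auto
  moreover have "(\<Sum>C\<in>\<C>. offdiag_sum a C) \<le> collision a H"
  proof -
    have "(\<Sum>C\<in>\<C>. offdiag_sum a C) \<le> (\<Sum>C\<in>cosets H. offdiag_sum a C)"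
      using \<C>(1) a_nonneg by (intro sum_mono2) (auto simp: offdiag_sum_def intro!: sum_nonneg)
    then show ?thesis
      by (simp add: sum_offdiag_sum_cosets[OF H])
  qed
  then have "sqrt (s * (\<Sum>C\<in>\<C>. offdiag_sum a C)) \<le> sqrt (s * collision a H)"
    by (simp add: mult_left_mono)
  moreover have "sum (coset_energy f) \<C> = (\<Sum>C\<in>\<C>. sum a C)"
    by (simp add: coset_energy_def a_def)
  ultimately have "top_sum (coset_energy f) (cosets H) s \<le> top_sum a UNIV s + sqrt (s * collision a H)"
    using M top_cosets by linarith
  then show ?thesis
    by (simp add: sum_subtractf coset_energy_sorted_def fourier_energy_sorted_def top_sum_def a_def [abs_def])
qed

lemma card_greater_mult_le_sum:
  fixes Q :: "'a \<Rightarrow> real" and c :: real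
  assumes "finite X" and "\<And>x. x \<in> X \<Longrightarrow> 0 \<le> Q x"
  shows "card {x \<in> X. c < Q x} * c \<le> (\<Sum>x\<in>X. Q x)"
proof -
  have "card {x \<in> X. c < Q x} * c = (\<Sum>x\<in>{x \<in> X. c < Q x}. c)"
    by simp
  also have "\<dots> \<le> (\<Sum>x\<in>{x \<in> X. c < Q x}. Q x)"
    by (rule sum_mono) simp
  also have "\<dots> \<le> (\<Sum>x\<in>X. Q x)"
    using assms by (intro sum_mono2) auto
  finally show ?thesis .
qed

lemma measure_pmf_of_set_ge:
  fixes k :: real
  assumes "finite X" and "X \<noteq> {}" and "0 < k" and "card (X - A) * k \<le> card X"
  shows "1 - 1 / k \<le> measure_pmf.prob (pmf_of_set X) A"
proof -
  have "real (card X) = card (X - A) + card (X \<inter> A)"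
    using card_Int_Diff[OF assms(1), of A] by simp
  then have "k * card X \<le> card X + k * card (X \<inter> A)"
    using assms(4) by (simp add: distrib_left mult.commute)
  then show ?thesis
    using assms(1-3) by (simp add: measure_pmf_of_set field_simps card_gt_0_iff)
qed

lemma card_subspaces_codim_large_collision_le:
  fixes a :: "'n::finite set \<Rightarrow> real" and d :: nat
  assumes a: "\<And>\<alpha>. 0 \<le> a \<alpha>"
  defines "X \<equiv> subspaces_codim d :: 'n set set set"
  shows "card {H \<in> X. 16 * (\<Sum>\<alpha>\<in>UNIV. a \<alpha>)^2 / 2 ^ d < collision a H} * 16 \<le> card X"
proof (cases "(\<Sum>\<alpha>\<in>UNIV. a \<alpha>) = 0")
  case True
  then have a_zero: "a \<alpha> = 0" for \<alpha>
    using a by (simp add: sum_nonneg_eq_0_iff)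
  have "collision a H = 0" for H
    unfolding collision_def by (intro sum.neutral ballI) (simp add: a_zero)
  then show ?thesis
    using True by simp
next
  case False
  define c where "c = 16 * (\<Sum>\<alpha>\<in>UNIV. a \<alpha>)^2 / 2 ^ d"
  have "0 < c"
    using False by (simp add: c_def)
  have "card {H \<in> X. c < collision a H} * c \<le> (\<Sum>H\<in>X. collision a H)"
    using a by (intro card_greater_mult_le_sum) (auto simp: collision_def intro!: sum_nonneg)
  also have "\<dots> \<le> card X * c / 16"
    using sum_collision_subspaces_codim_le[OF a, where d = d] by (simp add: X_def c_def)
  finally have "real (card {H \<in> X. c < collision a H} * 16) \<le> real (card X)"
    using \<open>0 < c\<close> by (simp add: field_simps)
  then show ?thesis
    by (simp only: of_nat_le_iff c_def)
qed

lemma coset_energy_excess_le_if_collision_le: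
  fixes f :: "'n::finite set \<Rightarrow> real" and \<epsilon> :: real
  assumes "H \<in> subspaces_codim d" and "s \<le> 2 ^ d" and "0 < s" and "0 < \<epsilon>"
    and "(2::real) ^ d = 2 * real s / \<epsilon> ^ 4"
    and "collision (\<lambda>\<alpha>. (fourier f \<alpha>)^2) H \<le> 16 * (norm2sq f)^2 / 2 ^ d"
  shows "(\<Sum>i=1..s. coset_energy_sorted f H i - fourier_energy_sorted f i) \<le> 5 * \<epsilon>^2 * norm2sq f"
proof -
  have "is_subspace H" "s \<le> card (cosets H)"
    using assms(1,2) card_cosets_subspaces_codim[OF assms(1)] by (auto simp: subspaces_codim_def)
  then have "(\<Sum>i=1..s. coset_energy_sorted f H i - fourier_energy_sorted f i)
      \<le> sqrt (s * collision (\<lambda>\<alpha>. (fourier f \<alpha>)^2) H)"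
    by (rule top_sum_coset_energy_excess_le)
  also have "\<dots> \<le> sqrt (s * (16 * (norm2sq f)^2 / 2 ^ d))"
    using assms(6) by (intro real_sqrt_le_mono mult_left_mono) simp_all
  also have "s * (16 * (norm2sq f)^2 / 2 ^ d) = 8 * (\<epsilon>^2 * norm2sq f)^2"
    using assms(3,4,5) by (simp add: field_simps power2_eq_square power4_eq_xxxx)
  also have "sqrt \<dots> \<le> 5 * \<epsilon>^2 * norm2sq f"
  proof (rule real_le_lsqrt)
    show "0 \<le> 5 * \<epsilon>^2 * norm2sq f"
      by (simp add: norm2sq_def sum_nonneg)
    have "(5 * \<epsilon>^2 * norm2sq f)^2 = 25 * (\<epsilon>^2 * norm2sq f)^2"
      by (simp add: power_mult_distrib)
    then show "8 * (\<epsilon>^2 * norm2sq f)^2 \<le> (5 * \<epsilon>^2 * norm2sq f)^2"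
      by simp
  qed
  finally show ?thesis .
qed

theorem corollary3p3:
  fixes f :: "'n::finite set \<Rightarrow> real" and s d :: nat and \<epsilon> :: real
  assumes "s \<ge> 1" and "0 < \<epsilon>" and "\<epsilon> \<le> 1/2"
    and "(2::real) ^ d = 2 * real s / \<epsilon> ^ 4"
    and "d \<le> CARD('n)"
  shows "measure_pmf.prob (pmf_of_set (subspaces_codim d))
           {H. (\<Sum>i=1..s. coset_energy_sorted f H i - fourier_energy_sorted f i)
               \<le> 5 * \<epsilon>^2 * norm2sq f} \<ge> 15/16"
proof -
  define X where "X = (subspaces_codim d :: 'n set set set)"
  define a where "a = (\<lambda>\<alpha>. (fourier f \<alpha>)^2)"
  define c where "c = 16 * (\<Sum>\<alpha>\<in>UNIV. a \<alpha>)^2 / 2 ^ d"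
  let ?Good = "{H. (\<Sum>i=1..s. coset_energy_sorted f H i - fourier_energy_sorted f i)
                 \<le> 5 * \<epsilon>^2 * norm2sq f}"
  have "2 * real s = 2 ^ d * \<epsilon> ^ 4"
    using assms(2,4) by (simp add: field_simps)
  also have "\<dots> \<le> 2 ^ d * 1"
    using assms(2,3) by (intro mult_left_mono power_le_one) simp_all
  finally have "real s \<le> 2 ^ d"
    by linarith
  then have "s \<le> 2 ^ d"
    using of_nat_le_iff[of s "2 ^ d"] by simp
  then have good: "H \<in> ?Good" if "H \<in> X" and "collision a H \<le> c" for H
    using that assms(1,2,4) coset_energy_excess_le_if_collision_le[of H d s \<epsilon> f]
    by (simp add: X_def a_def c_def parseval)
  have "card (X - ?Good) * 16 \<le> card {H \<in> X. c < collision a H} * 16"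
    using good by (intro mult_le_mono1 card_mono) (auto simp: X_def not_le [symmetric])
  also have "\<dots> \<le> card X"
    unfolding X_def c_def by (rule card_subspaces_codim_large_collision_le) (simp add: a_def)
  finally have "real (card (X - ?Good) * 16) \<le> real (card X)"
    by (simp only: of_nat_le_iff)
  then show ?thesis
    using measure_pmf_of_set_ge[of X 16 ?Good] subspaces_codim_nonempty[OF assms(5)]
    by (simp add: X_def)
qed

end
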